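(* Let $m,n\ge1$, let $\mathbf{V}\in\mathbb{R}^{n\times n}$ be a nonzero symmetric matrix such that $\langle\mathbf{X}^\intercal\mathbf{X},\mathbf{V}/\|\mathbf{V}\|\rangle\ge0$ for all $\mathbf{X}\in\mathbb{R}^{m\times n}$, and let $\|\mathbf{X}\|_{\mathcal{H}}(\mathbf{V})=\big(\langle\mathbf{X}^\intercal\mathbf{X},\mathbf{V}/\|\mathbf{V}\|\rangle\big)^{1/2}$. Let $\mathcal{X}\subseteq\mathbb{R}^{m\times n}$ be a domain of inputs and $\mathcal{W}\subseteq\mathbb{R}^{m\times n}$ a set of weight matrices (the same for both classifiers), and let $\Phi(a,y)=\max\{0,1-ay\}$ be the hinge loss with $y\in\{-1,+1\}$. Define $R=\sup_{\mathbf{X}\in\mathcal{X}}\|\mathbf{X}\|$, $B=\sup_{\mathbf{W}\in\mathcal{W}}\|\mathbf{W}\|$, $R'=\sup_{\mathbf{X}\in\mathcal{X}}\|\mathbf{X}\|_{\mathcal{H}}(\mathbf{V})$, $B'=\sup_{\mathbf{W}\in\mathcal{W}}\|\mathbf{W}\|_{\mathcal{H}}(\mathbf{V})$, $c=\max_{y}\max_{a\in[-BR,BR]}|\Phi(a,y)|$ and $c'=\max_y\max_{a\in[-B'R',B'R']}|\Phi(a,y)|$. Then $R'\le R$, $B'\le B$ and $c'\le c$.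
   Context: $\langle\mathbf{A},\mathbf{B}\rangle=\sum_{i,j}a_{ij}b_{ij}$ denotes the Frobenius inner product and $\|\cdot\|$ the Frobenius norm. $R,B,c$ are the constants appearing in the generalization bound for the Frobenius-norm constrained support tensor machine, and $R',B',c'$ those appearing in the analogous bound for the kernel support matrix machine with norm $\|\cdot\|_{\mathcal{H}}(\mathbf{V})$. *)

theory Defs
  imports "HOL-Analysis.Analysis"
begin

text \<open>Real m x n matrices are rendered as real^'n^'m. On this type the library's
  inner product and norm are exactly the Frobenius inner product and Frobenius norm.\<close>

definition frob_inner :: "real^'n^'m \<Rightarrow> real^'n^'m \<Rightarrow> real" where
  "frob_inner A B = (\<Sum>i\<in>UNIV. \<Sum>j\<in>UNIV. A $ i $ j * B $ i $ j)"

definition frob_norm :: "real^'n^'m \<Rightarrow> real" where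
  "frob_norm A = sqrt (frob_inner A A)"

definition hnorm :: "real^'n^'n \<Rightarrow> real^'n^'m \<Rightarrow> real" where
  "hnorm V X = sqrt (frob_inner (transpose X ** X) ((1 / frob_norm V) *\<^sub>R V))"

definition hinge :: "real \<Rightarrow> real \<Rightarrow> real" where
  "hinge a y = max 0 (1 - a * y)"

text \<open>c = max over y in {-1,1} and a in [-BR, BR] of |Phi(a,y)| (a maximum of a
  continuous function on a compact set, expressed as a supremum).\<close>
definition hinge_const :: "real \<Rightarrow> real" where
  "hinge_const t = Sup {\<bar>hinge a y\<bar> | a y. y \<in> {-1, 1} \<and> a \<in> {-t..t}}"

end

theory Submission
  imports Defs
begin

text \<open>With \<open>U = V / \<parallel>V\<parallel>\<close> a unit matrix, Cauchy--Schwarz and submultiplicativity of the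
  Frobenius norm give \<open>\<parallel>X\<parallel>\<^sub>H(V)\<^sup>2 = \<langle>X\<^sup>T X, U\<rangle> \<le> \<parallel>X\<^sup>T X\<parallel> \<le> \<parallel>X\<parallel>\<^sup>2\<close>. Taking suprema yields
  \<open>R' \<le> R\<close> and \<open>B' \<le> B\<close>; positive semidefiniteness makes \<open>R'\<close> and \<open>B'\<close> nonnegative, so
  \<open>B' R' \<le> B R\<close>, and \<open>c' \<le> c\<close> because the hinge constant is monotone in the radius.\<close>

lemma frob_inner_eq_inner: "frob_inner = inner"
  by (intro ext) (simp add: frob_inner_def inner_vec_def)

lemma frob_norm_eq_norm: "frob_norm = norm"
  by (intro ext) (simp add: frob_norm_def frob_inner_eq_inner norm_eq_sqrt_inner)

lemma power2_norm_vec_sum: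
  "(norm (x :: 'a::real_normed_vector ^ 'n))\<^sup>2 = (\<Sum>i\<in>UNIV. (norm (x $ i))\<^sup>2)"
  by (simp add: norm_vec_def L2_set_def sum_nonneg)

lemma norm_transpose: "norm (transpose (A :: real^'n^'m)) = norm A"
proof -
  have "(norm (transpose A))\<^sup>2 = (\<Sum>j\<in>UNIV. \<Sum>i\<in>UNIV. (A $ i $ j)\<^sup>2)"
    by (simp add: power2_norm_vec_sum transpose_def)
  also have "\<dots> = (\<Sum>i\<in>UNIV. \<Sum>j\<in>UNIV. (A $ i $ j)\<^sup>2)"
    by (rule sum.swap)
  also have "\<dots> = (norm A)\<^sup>2"
    by (simp add: power2_norm_vec_sum)
  finally show ?thesis
    by (simp add: power2_eq_iff_nonneg)
qed

lemma matrix_matrix_mult_entry: "(A ** B) $ i $ k = inner (A $ i) (transpose B $ k)"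
  by (simp add: matrix_matrix_mult_def transpose_def inner_vec_def)

lemma norm_matrix_matrix_mult_le:
  "norm ((A :: real^'n^'m) ** (B :: real^'p^'n)) \<le> norm A * norm B"
proof -
  have "(norm (A ** B))\<^sup>2 = (\<Sum>i\<in>UNIV. \<Sum>k\<in>UNIV. (inner (A $ i) (transpose B $ k))\<^sup>2)"
    by (simp add: power2_norm_vec_sum matrix_matrix_mult_entry)
  also have "\<dots> \<le> (\<Sum>i\<in>UNIV. \<Sum>k\<in>UNIV. (norm (A $ i))\<^sup>2 * (norm (transpose B $ k))\<^sup>2)"
    by (intro sum_mono) (simp add: power2_norm_eq_inner Cauchy_Schwarz_ineq)
  also have "\<dots> = (\<Sum>i\<in>UNIV. (norm (A $ i))\<^sup>2) * (\<Sum>k\<in>UNIV. (norm (transpose B $ k))\<^sup>2)"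
    by (rule sum_product[symmetric])
  also have "\<dots> = (norm A * norm B)\<^sup>2"
    by (simp only: power2_norm_vec_sum[symmetric] norm_transpose power_mult_distrib)
  finally show ?thesis
    by (rule power2_le_imp_le) simp
qed

lemma hnorm_le_frob_norm:
  fixes V :: "real^'n^'n" and X :: "real^'n^'m"
  assumes "V \<noteq> 0"
  shows "hnorm V X \<le> frob_norm X"
proof -
  let ?U = "(1 / norm V) *\<^sub>R V"
  have "inner (transpose X ** X) ?U \<le> norm (transpose X ** X) * norm ?U"
    by (rule norm_cauchy_schwarz)
  also have "\<dots> = norm (transpose X ** X)"
    using assms by simp
  also have "\<dots> \<le> (norm X)\<^sup>2"
    using norm_matrix_matrix_mult_le[of "transpose X" X]
    by (simp add: norm_transpose power2_eq_square)
  finally have "sqrt (inner (transpose X ** X) ?U) \<le> sqrt ((norm X)\<^sup>2)"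
    by (rule real_sqrt_le_mono)
  then show ?thesis
    by (simp add: hnorm_def frob_inner_eq_inner frob_norm_eq_norm)
qed

lemma bdd_above_hnorm:
  fixes V :: "real^'n^'n" and S :: "(real^'n^'m) set"
  assumes "V \<noteq> 0" "bounded S"
  shows "bdd_above (hnorm V ` S)"
proof -
  obtain M where M: "\<forall>X\<in>S. norm X \<le> M"
    using assms(2) by (auto simp: bounded_iff)
  show ?thesis
  proof (rule bdd_aboveI2)
    fix X
    assume "X \<in> S"
    then show "hnorm V X \<le> M"
      using M hnorm_le_frob_norm[OF assms(1), of X] by (auto simp: frob_norm_eq_norm)
  qed
qed

lemma Sup_hnorm_le_Sup_frob_norm:
  fixes V :: "real^'n^'n" and S :: "(real^'n^'m) set"
  assumes "V \<noteq> 0" "S \<noteq> {}" "bounded S"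
  shows "Sup (hnorm V ` S) \<le> Sup (frob_norm ` S)"
proof (rule cSUP_mono)
  show "bdd_above (frob_norm ` S)"
    using assms(3) by (simp add: frob_norm_eq_norm bdd_above_norm)
qed (use assms hnorm_le_frob_norm in blast)+

lemma Sup_hnorm_nonneg:
  fixes V :: "real^'n^'n" and S :: "(real^'n^'m) set"
  assumes "V \<noteq> 0" "S \<noteq> {}" "bounded S"
    and "\<forall>X :: real^'n^'m. frob_inner (transpose X ** X) ((1 / frob_norm V) *\<^sub>R V) \<ge> 0"
  shows "0 \<le> Sup (hnorm V ` S)"
proof -
  obtain X where "X \<in> S"
    using assms(2) by blast
  have "0 \<le> hnorm V X"
    using assms(4) by (simp add: hnorm_def)
  also have "\<dots> \<le> Sup (hnorm V ` S)"
    using bdd_above_hnorm[OF assms(1,3)] \<open>X \<in> S\<close> by (rule cSUP_upper2) simp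
  finally show ?thesis .
qed

lemma abs_hinge_le: "y \<in> {-1, 1} \<Longrightarrow> \<bar>hinge a y\<bar> \<le> 1 + \<bar>a\<bar>"
  unfolding hinge_def by auto

lemma hinge_const_mono:
  assumes "0 \<le> s" "s \<le> t"
  shows "hinge_const s \<le> hinge_const t"
  unfolding hinge_const_def
proof (rule cSup_subset_mono)
  have "\<bar>hinge 0 1\<bar> \<in> {\<bar>hinge a y\<bar> | a y. y \<in> {-1, 1} \<and> a \<in> {-s..s}}"
    using assms(1) by (intro CollectI exI[of _ 0] exI[of _ 1]) simp
  then show "{\<bar>hinge a y\<bar> | a y. y \<in> {-1, 1} \<and> a \<in> {-s..s}} \<noteq> {}"
    by blast
  show "bdd_above {\<bar>hinge a y\<bar> | a y. y \<in> {-1, 1} \<and> a \<in> {-t..t}}"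
  proof (rule bdd_aboveI[where M = "1 + t"], clarify)
    fix a y :: real
    assume "y \<in> {-1, 1}" "a \<in> {-t..t}"
    then show "\<bar>hinge a y\<bar> \<le> 1 + t"
      using abs_hinge_le[of y a] by auto
  qed
  show "{\<bar>hinge a y\<bar> | a y. y \<in> {-1, 1} \<and> a \<in> {-s..s}}
      \<subseteq> {\<bar>hinge a y\<bar> | a y. y \<in> {-1, 1} \<and> a \<in> {-t..t}}"
    using assms(2) by fastforce
qed

theorem theorem3:
  fixes V :: "real^'n^'n"
    and Xs :: "(real^'n^'m) set"
    and Ws :: "(real^'n^'m) set"
  assumes V_nz: "V \<noteq> 0"
    and V_sym: "transpose V = V"
    and V_psd: "\<forall>X :: real^'n^'m. frob_inner (transpose X ** X) ((1 / frob_norm V) *\<^sub>R V) \<ge> 0"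
    and Xs_ne: "Xs \<noteq> {}" and Xs_bdd: "bounded Xs"
    and Ws_ne: "Ws \<noteq> {}" and Ws_bdd: "bounded Ws"
  defines "R \<equiv> Sup (frob_norm ` Xs)"
    and "B \<equiv> Sup (frob_norm ` Ws)"
    and "R' \<equiv> Sup (hnorm V ` Xs)"
    and "B' \<equiv> Sup (hnorm V ` Ws)"
  shows "R' \<le> R \<and> B' \<le> B \<and> hinge_const (B' * R') \<le> hinge_const (B * R)"
proof -
  have "R' \<le> R" "B' \<le> B"
    unfolding R_def R'_def B_def B'_def
    using Sup_hnorm_le_Sup_frob_norm V_nz Xs_ne Xs_bdd Ws_ne Ws_bdd by blast+
  moreover have "0 \<le> R'" "0 \<le> B'"
    unfolding R'_def B'_def
    using Sup_hnorm_nonneg V_nz V_psd Xs_ne Xs_bdd Ws_ne Ws_bdd by blast+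
  ultimately have "hinge_const (B' * R') \<le> hinge_const (B * R)"
    by (intro hinge_const_mono mult_nonneg_nonneg mult_mono) linarith+
  with \<open>R' \<le> R\<close> \<open>B' \<le> B\<close> show ?thesis
    by (intro conjI)
qed

end
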